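(* Let $\{G_t,t\ge0\}$ be a one-dimensional centered Gaussian process with covariance $R(s,t)=\mathbb{E}(G_sG_t)$, let $\mu\in\mathbb{R}$, $\sigma>0$, and $X_t=\mu t+\sigma G_t$. Let $0<t_1<t_2<\cdots$, and for each $n$ let $\mathbf t=(t_1,\dots,t_n)'$, $\mathbf X=(X_{t_1},\dots,X_{t_n})'$, $\mathbf V=(R(t_i,t_j))_{i,j=1}^n$, and $$\hat\sigma_n^2=\frac1n\,\frac{(\mathbf X'\mathbf V^{-1}\mathbf X)(\mathbf t'\mathbf V^{-1}\mathbf t)-(\mathbf t'\mathbf V^{-1}\mathbf X)^2}{\mathbf t'\mathbf V^{-1}\mathbf t}.$$ Assume that for every $n$ the matrix $\mathbf V$ is strictly positive definite. Then $\hat\sigma_n^2$ is an asymptotically unbiased and $L^2$-consistent estimator of $\sigma^2$, i.e. $\mathbb{E}(\hat\sigma_n^2)\to\sigma^2$ and $\mathbb{E}\big(|\hat\sigma_n^2-\sigma^2|^2\big)\to0$ as $n\to\infty$.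
   Context: $\hat\sigma_n^2$ is the maximum likelihood estimator of $\sigma^2$ based on the discrete observations $\mathbf X$. *)

theory Defs
  imports "HOL-Probability.Probability"
begin

definition centered_gaussian_rv :: "'a measure \<Rightarrow> ('a \<Rightarrow> real) \<Rightarrow> bool" where
  "centered_gaussian_rv M Y \<longleftrightarrow> Y \<in> borel_measurable M \<and>
     ((AE \<omega> in M. Y \<omega> = 0) \<or> (\<exists>s>0. distributed M lborel Y (normal_density 0 s)))"

definition centered_gaussian_process :: "'a measure \<Rightarrow> (real \<Rightarrow> 'a \<Rightarrow> real) \<Rightarrow> bool" where
  "centered_gaussian_process M G \<longleftrightarrow>
     (\<forall>(k::nat) (s::nat \<Rightarrow> real) (c::nat \<Rightarrow> real). (\<forall>i<k. s i \<ge> 0) \<longrightarrow>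
        centered_gaussian_rv M (\<lambda>\<omega>. \<Sum>i<k. c i * G (s i) \<omega>))"

text \<open>n x n real matrices are represented as functions nat => nat => real
  (entries with an index >= n are irrelevant); vectors as nat => real.\<close>

definition strictly_pos_def_mat :: "nat \<Rightarrow> (nat \<Rightarrow> nat \<Rightarrow> real) \<Rightarrow> bool" where
  "strictly_pos_def_mat n V \<longleftrightarrow>
     (\<forall>x::nat \<Rightarrow> real. (\<exists>i<n. x i \<noteq> 0) \<longrightarrow> (\<Sum>i<n. \<Sum>j<n. x i * V i j * x j) > 0)"

definition mat_inv_n :: "nat \<Rightarrow> (nat \<Rightarrow> nat \<Rightarrow> real) \<Rightarrow> (nat \<Rightarrow> nat \<Rightarrow> real)" where
  "mat_inv_n n V = (THE W. (\<forall>i<n. \<forall>j<n. (\<Sum>k<n. V i k * W k j) = (if i = j then 1 else 0))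
                          \<and> (\<forall>i j. (n \<le> i \<or> n \<le> j) \<longrightarrow> W i j = 0))"

definition bilin_n :: "nat \<Rightarrow> (nat \<Rightarrow> nat \<Rightarrow> real) \<Rightarrow> (nat \<Rightarrow> real) \<Rightarrow> (nat \<Rightarrow> real) \<Rightarrow> real" where
  "bilin_n n W x y = (\<Sum>i<n. \<Sum>j<n. x i * W i j * y j)"

text \<open>The estimator; times t_1 < t_2 < ... are t 0 < t 1 < ... (0-based),
  X is the observation vector, R the covariance function.\<close>
definition sigma2_hat :: "(real \<Rightarrow> real \<Rightarrow> real) \<Rightarrow> (nat \<Rightarrow> real) \<Rightarrow> nat \<Rightarrow> (nat \<Rightarrow> real) \<Rightarrow> real" where
  "sigma2_hat R t n X =
     (let W = mat_inv_n n (\<lambda>i j. R (t i) (t j)) in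
      (1 / real n) * ((bilin_n n W X X * bilin_n n W t t - (bilin_n n W t X)\<^sup>2) / bilin_n n W t t))"

end

theory Submission
  imports Defs "Jordan_Normal_Form.Determinant" "HOL-Real_Asymp.Real_Asymp"
begin

text \<open>Write \<open>X = \<mu> t + \<sigma> g\<close> with \<open>g = (G t\<^sub>1, ..., G t\<^sub>n)\<close> and \<open>W = V\<^sup>-\<^sup>1\<close>. The estimator is
  \<open>\<sigma>\<^sup>2/n\<close> times the generalised least-squares residual \<open>g'Wg - (t'Wg)\<^sup>2 / t'Wt\<close>, since that
  residual ignores the drift \<open>\<mu> t\<close> and is homogeneous of degree 2. The residual is
  \<open>\<chi>\<^sup>2\<close>-distributed with \<open>n - 1\<close> degrees of freedom; only its first two moments \<open>n - 1\<close> and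
  \<open>n\<^sup>2 - 1\<close> are needed. They are computed by expanding it in the \<open>g\<^sub>i\<close> and the dual variables
  \<open>(Wg)\<^sub>k\<close>, which satisfy \<open>cov(g\<^sub>i, (Wg)\<^sub>k) = \<delta>\<^sub>i\<^sub>k\<close>, and evaluating fourth moments by
  Isserlis' theorem, obtained by polarising \<open>E Y\<^sup>4 = 3 (E Y\<^sup>2)\<^sup>2\<close>. Hence
  \<open>E \<sigma>\<^sub>n\<^sup>2 = \<sigma>\<^sup>2 (n - 1)/n\<close> and \<open>E (\<sigma>\<^sub>n\<^sup>2 - \<sigma>\<^sup>2)\<^sup>2 = \<sigma>\<^sup>4 (2n - 1)/n\<^sup>2\<close>.\<close>

lemma centered_gaussian_rv_moments:
  assumes "prob_space M" and Y: "centered_gaussian_rv M Y"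
  shows "integrable M (\<lambda>\<omega>. Y \<omega> ^ 2)" and "integrable M (\<lambda>\<omega>. Y \<omega> ^ 4)"
    and "prob_space.expectation M (\<lambda>\<omega>. Y \<omega> ^ 4) = 3 * (prob_space.expectation M (\<lambda>\<omega>. Y \<omega> ^ 2))\<^sup>2"
proof -
  interpret prob_space M by fact
  consider "AE \<omega> in M. Y \<omega> = 0" | s where "s > 0" "distributed M lborel Y (normal_density 0 s)"
    using Y unfolding centered_gaussian_rv_def by blast
  then have "integrable M (\<lambda>\<omega>. Y \<omega> ^ 2) \<and> integrable M (\<lambda>\<omega>. Y \<omega> ^ 4) \<and>
    expectation (\<lambda>\<omega>. Y \<omega> ^ 4) = 3 * (expectation (\<lambda>\<omega>. Y \<omega> ^ 2))\<^sup>2"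
  proof cases
    case 1
    have Y_meas: "Y \<in> borel_measurable M" using Y unfolding centered_gaussian_rv_def by simp
    have "AE \<omega> in M. Y \<omega> ^ k = 0" if "k > 0" for k :: nat using 1 that by auto
    then have "integrable M (\<lambda>\<omega>. Y \<omega> ^ k) \<and> expectation (\<lambda>\<omega>. Y \<omega> ^ k) = 0" if "k > 0" for k
      using that integrable_cong_AE[of "\<lambda>\<omega>. Y \<omega> ^ k" M "\<lambda>_. 0"] integral_cong_AE[of "\<lambda>\<omega>. Y \<omega> ^ k" M "\<lambda>_. 0"]
      using Y_meas by auto
    from this[of 2] this[of 4] show ?thesis by simp
  next
    case 2
    have "integrable M (\<lambda>\<omega>. Y \<omega> ^ k)" for k
      using distributed_integrable[OF 2(2), of "\<lambda>x. x ^ k"] integrable_normal_moment[OF 2(1), of 0 k] by simp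
    moreover have "expectation (\<lambda>\<omega>. Y \<omega> ^ (2 * k)) = fact (2 * k) / ((2 / s\<^sup>2) ^ k * fact k)" for k
      using distributed_integral[OF 2(2), of "\<lambda>x. x ^ (2 * k)"] integral_normal_moment_even[OF 2(1), of 0 k]
      by simp
    from this[of 1] this[of 2] have "expectation (\<lambda>\<omega>. Y \<omega> ^ 2) = s\<^sup>2" "expectation (\<lambda>\<omega>. Y \<omega> ^ 4) = 3 * s ^ 4"
      using 2(1) by (simp_all add: field_simps fact_numeral power2_eq_square power4_eq_xxxx)
    moreover have "s ^ 4 = (s\<^sup>2)\<^sup>2" by simp
    ultimately show ?thesis by metis
  qed
  then show "integrable M (\<lambda>\<omega>. Y \<omega> ^ 2)" and "integrable M (\<lambda>\<omega>. Y \<omega> ^ 4)"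
    and "expectation (\<lambda>\<omega>. Y \<omega> ^ 4) = 3 * (expectation (\<lambda>\<omega>. Y \<omega> ^ 2))\<^sup>2" by simp_all
qed

locale centered_gaussian_space = prob_space M for M :: "'a measure" +
  fixes F :: "('a \<Rightarrow> real) set"
  assumes gaussian: "Y \<in> F \<Longrightarrow> centered_gaussian_rv M Y"
    and add_closed: "Y \<in> F \<Longrightarrow> Z \<in> F \<Longrightarrow> (\<lambda>\<omega>. Y \<omega> + Z \<omega>) \<in> F"
    and scale_closed: "Y \<in> F \<Longrightarrow> (\<lambda>\<omega>. a * Y \<omega>) \<in> F"
begin

abbreviation cov :: "('a \<Rightarrow> real) \<Rightarrow> ('a \<Rightarrow> real) \<Rightarrow> real" where
  "cov Y Z \<equiv> expectation (\<lambda>\<omega>. Y \<omega> * Z \<omega>)"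

lemma cov_commute: "cov Y Z = cov Z Y"
  by (simp add: mult.commute)

lemma lincomb_closed: "Y \<in> F \<Longrightarrow> Z \<in> F \<Longrightarrow> (\<lambda>\<omega>. Y \<omega> + s * Z \<omega>) \<in> F"
  using add_closed scale_closed by blast

lemma integrable_mult:
  assumes "Y \<in> F" "Z \<in> F"
  shows "integrable M (\<lambda>\<omega>. Y \<omega> * Z \<omega>)"
proof -
  have "(\<lambda>\<omega>. Y \<omega> * Z \<omega>) = (\<lambda>\<omega>. ((Y \<omega> + Z \<omega>) ^ 2 - Y \<omega> ^ 2 - Z \<omega> ^ 2) / 2)"
    by (simp add: power2_eq_square algebra_simps)
  then show ?thesis
    using centered_gaussian_rv_moments(1)[OF prob_space_axioms gaussian] assms add_closed by simp
qed

lemma cov_lincomb_left: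
  assumes "Y \<in> F" "Z \<in> F" "U \<in> F"
  shows "cov (\<lambda>\<omega>. Y \<omega> + s * Z \<omega>) U = cov Y U + s * cov Z U"
proof -
  have "(\<lambda>\<omega>. (Y \<omega> + s * Z \<omega>) * U \<omega>) = (\<lambda>\<omega>. Y \<omega> * U \<omega> + s * (Z \<omega> * U \<omega>))"
    by (simp add: algebra_simps)
  then show ?thesis using integrable_mult assms by simp
qed

lemma cov_lincomb_self:
  assumes "Y \<in> F" "Z \<in> F"
  shows "cov (\<lambda>\<omega>. Y \<omega> + s * Z \<omega>) (\<lambda>\<omega>. Y \<omega> + s * Z \<omega>) = cov Y Y + 2 * s * cov Y Z + s\<^sup>2 * cov Z Z"
proof -
  let ?U = "\<lambda>\<omega>. Y \<omega> + s * Z \<omega>"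
  have "cov ?U ?U = cov Y ?U + s * cov Z ?U"
    using cov_lincomb_left assms lincomb_closed by blast
  also have "cov Y ?U = cov Y Y + s * cov Y Z"
    using cov_lincomb_left[OF assms assms(1)] cov_commute by metis
  also have "cov Z ?U = cov Y Z + s * cov Z Z"
    using cov_lincomb_left[OF assms assms(2)] cov_commute by metis
  finally show ?thesis by (simp add: algebra_simps power2_eq_square)
qed

lemma cov_sum_right:
  assumes "finite I" "Y \<in> F" "\<And>i. i \<in> I \<Longrightarrow> Z i \<in> F"
  shows "cov Y (\<lambda>\<omega>. \<Sum>i\<in>I. a i * Z i \<omega>) = (\<Sum>i\<in>I. a i * cov Y (Z i))"
proof -
  have "(\<lambda>\<omega>. Y \<omega> * (\<Sum>i\<in>I. a i * Z i \<omega>)) = (\<lambda>\<omega>. \<Sum>i\<in>I. a i * (Y \<omega> * Z i \<omega>))"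
    by (simp add: sum_distrib_left algebra_simps)
  then show ?thesis using integrable_mult assms by simp
qed

lemma fourth_moment:
  assumes "Y \<in> F"
  shows "integrable M (\<lambda>\<omega>. Y \<omega> ^ 4)" "expectation (\<lambda>\<omega>. Y \<omega> ^ 4) = 3 * (cov Y Y)\<^sup>2"
  using centered_gaussian_rv_moments[OF prob_space_axioms gaussian[OF assms]]
  by (simp_all add: power2_eq_square)

lemma expectation_square_mult_square:
  assumes Y: "Y \<in> F" and Z: "Z \<in> F"
  shows "integrable M (\<lambda>\<omega>. Y \<omega> ^ 2 * Z \<omega> ^ 2)"
    and "expectation (\<lambda>\<omega>. Y \<omega> ^ 2 * Z \<omega> ^ 2) = cov Y Y * cov Z Z + 2 * (cov Y Z)\<^sup>2"
proof -
  let ?P = "\<lambda>\<omega>. Y \<omega> + 1 * Z \<omega>" and ?Q = "\<lambda>\<omega>. Y \<omega> + (-1) * Z \<omega>"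
  have PQ: "?P \<in> F" "?Q \<in> F" using lincomb_closed Y Z by blast+
  note m = fourth_moment[OF Y] fourth_moment[OF Z] fourth_moment[OF PQ(1)] fourth_moment[OF PQ(2)]
  have polar: "(\<lambda>\<omega>. Y \<omega> ^ 2 * Z \<omega> ^ 2) =
      (\<lambda>\<omega>. (?P \<omega> ^ 4 + ?Q \<omega> ^ 4 - 2 * Y \<omega> ^ 4 - 2 * Z \<omega> ^ 4) / 12)"
    by (simp add: fun_eq_iff algebra_simps power2_eq_square power4_eq_xxxx)
  show "integrable M (\<lambda>\<omega>. Y \<omega> ^ 2 * Z \<omega> ^ 2)"
    unfolding polar using m by simp
  have "expectation (\<lambda>\<omega>. Y \<omega> ^ 2 * Z \<omega> ^ 2) =
      (3 * (cov ?P ?P)\<^sup>2 + 3 * (cov ?Q ?Q)\<^sup>2 - 6 * (cov Y Y)\<^sup>2 - 6 * (cov Z Z)\<^sup>2) / 12"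
    unfolding polar using m by simp
  also have "\<dots> = cov Y Y * cov Z Z + 2 * (cov Y Z)\<^sup>2"
    unfolding cov_lincomb_self[OF Y Z] by (simp add: algebra_simps power2_eq_square)
  finally show "expectation (\<lambda>\<omega>. Y \<omega> ^ 2 * Z \<omega> ^ 2) = cov Y Y * cov Z Z + 2 * (cov Y Z)\<^sup>2" .
qed

lemma expectation_mult_mult_square:
  assumes Y1: "Y1 \<in> F" and Y2: "Y2 \<in> F" and Z: "Z \<in> F"
  shows "integrable M (\<lambda>\<omega>. Y1 \<omega> * Y2 \<omega> * Z \<omega> ^ 2)"
    and "expectation (\<lambda>\<omega>. Y1 \<omega> * Y2 \<omega> * Z \<omega> ^ 2) = cov Y1 Y2 * cov Z Z + 2 * cov Y1 Z * cov Y2 Z"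
proof -
  let ?P = "\<lambda>\<omega>. Y1 \<omega> + 1 * Y2 \<omega>" and ?Q = "\<lambda>\<omega>. Y1 \<omega> + (-1) * Y2 \<omega>"
  have PQ: "?P \<in> F" "?Q \<in> F" using lincomb_closed Y1 Y2 by blast+
  note m = expectation_square_mult_square[OF PQ(1) Z] expectation_square_mult_square[OF PQ(2) Z]
  have polar: "(\<lambda>\<omega>. Y1 \<omega> * Y2 \<omega> * Z \<omega> ^ 2) =
      (\<lambda>\<omega>. (?P \<omega> ^ 2 * Z \<omega> ^ 2 - ?Q \<omega> ^ 2 * Z \<omega> ^ 2) / 4)"
    by (simp add: fun_eq_iff algebra_simps power2_eq_square)
  show "integrable M (\<lambda>\<omega>. Y1 \<omega> * Y2 \<omega> * Z \<omega> ^ 2)"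
    unfolding polar using m by simp
  have "expectation (\<lambda>\<omega>. Y1 \<omega> * Y2 \<omega> * Z \<omega> ^ 2) =
      (cov ?P ?P * cov Z Z + 2 * (cov ?P Z)\<^sup>2 - cov ?Q ?Q * cov Z Z - 2 * (cov ?Q Z)\<^sup>2) / 4"
    unfolding polar using m by simp
  also have "\<dots> = cov Y1 Y2 * cov Z Z + 2 * cov Y1 Z * cov Y2 Z"
    unfolding cov_lincomb_self[OF Y1 Y2] cov_lincomb_left[OF Y1 Y2 Z]
    by (simp add: algebra_simps power2_eq_square)
  finally show "expectation (\<lambda>\<omega>. Y1 \<omega> * Y2 \<omega> * Z \<omega> ^ 2) = cov Y1 Y2 * cov Z Z + 2 * cov Y1 Z * cov Y2 Z" .
qed

lemma isserlis:
  assumes Y1: "Y1 \<in> F" and Y2: "Y2 \<in> F" and Y3: "Y3 \<in> F" and Y4: "Y4 \<in> F"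
  shows "integrable M (\<lambda>\<omega>. Y1 \<omega> * Y2 \<omega> * Y3 \<omega> * Y4 \<omega>)"
    and "expectation (\<lambda>\<omega>. Y1 \<omega> * Y2 \<omega> * Y3 \<omega> * Y4 \<omega>) =
      cov Y1 Y2 * cov Y3 Y4 + cov Y1 Y3 * cov Y2 Y4 + cov Y1 Y4 * cov Y2 Y3"
proof -
  let ?P = "\<lambda>\<omega>. Y3 \<omega> + 1 * Y4 \<omega>" and ?Q = "\<lambda>\<omega>. Y3 \<omega> + (-1) * Y4 \<omega>"
  have PQ: "?P \<in> F" "?Q \<in> F" using lincomb_closed Y3 Y4 by blast+
  note m = expectation_mult_mult_square[OF Y1 Y2 PQ(1)] expectation_mult_mult_square[OF Y1 Y2 PQ(2)]
  have polar: "(\<lambda>\<omega>. Y1 \<omega> * Y2 \<omega> * Y3 \<omega> * Y4 \<omega>) =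
      (\<lambda>\<omega>. (Y1 \<omega> * Y2 \<omega> * ?P \<omega> ^ 2 - Y1 \<omega> * Y2 \<omega> * ?Q \<omega> ^ 2) / 4)"
    by (simp add: fun_eq_iff algebra_simps power2_eq_square)
  show "integrable M (\<lambda>\<omega>. Y1 \<omega> * Y2 \<omega> * Y3 \<omega> * Y4 \<omega>)"
    unfolding polar using m by simp
  have "expectation (\<lambda>\<omega>. Y1 \<omega> * Y2 \<omega> * Y3 \<omega> * Y4 \<omega>) =
      (cov Y1 Y2 * cov ?P ?P + 2 * cov Y1 ?P * cov Y2 ?P
       - cov Y1 Y2 * cov ?Q ?Q - 2 * cov Y1 ?Q * cov Y2 ?Q) / 4"
    unfolding polar using m by simp
  also have "\<dots> = cov Y1 Y2 * cov Y3 Y4 + cov Y1 Y3 * cov Y2 Y4 + cov Y1 Y4 * cov Y2 Y3"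
    unfolding cov_lincomb_self[OF Y3 Y4] cov_commute[of Y1 ?P] cov_commute[of Y1 ?Q]
      cov_commute[of Y2 ?P] cov_commute[of Y2 ?Q] cov_lincomb_left[OF Y3 Y4 Y1] cov_lincomb_left[OF Y3 Y4 Y2]
    by (simp add: algebra_simps power2_eq_square)
  finally show "expectation (\<lambda>\<omega>. Y1 \<omega> * Y2 \<omega> * Y3 \<omega> * Y4 \<omega>) =
      cov Y1 Y2 * cov Y3 Y4 + cov Y1 Y3 * cov Y2 Y4 + cov Y1 Y4 * cov Y2 Y3" .
qed

end

definition inverts_mat_n :: "nat \<Rightarrow> (nat \<Rightarrow> nat \<Rightarrow> real) \<Rightarrow> (nat \<Rightarrow> nat \<Rightarrow> real) \<Rightarrow> bool" where
  "inverts_mat_n n A B \<longleftrightarrow> (\<forall>i<n. \<forall>j<n. (\<Sum>k<n. A i k * B k j) = (if i = j then 1 else 0))"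

lemma sum_mat_mult_assoc:
  fixes a c :: "nat \<Rightarrow> real" and B :: "nat \<Rightarrow> nat \<Rightarrow> real"
  shows "(\<Sum>l<n. a l * (\<Sum>k<n. B l k * c k)) = (\<Sum>k<n. (\<Sum>l<n. a l * B l k) * c k)"
  by (simp add: sum_distrib_left sum_distrib_right mult.assoc) (rule sum.swap)

lemma inverts_mat_nD:
  "inverts_mat_n n A B \<Longrightarrow> i < n \<Longrightarrow> j < n \<Longrightarrow> (\<Sum>k<n. A i k * B k j) = (if i = j then 1 else 0)"
  unfolding inverts_mat_n_def by blast

lemma inverts_mat_n_unique:
  assumes L: "inverts_mat_n n L V" and W: "inverts_mat_n n V W" and "i < n" "j < n"
  shows "L i j = W i j"
proof -
  have "L i j = (\<Sum>l<n. L i l * (\<Sum>k<n. V l k * W k j))"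
    using \<open>j < n\<close> by (simp add: inverts_mat_nD[OF W] if_distrib cong: if_cong)
  also have "\<dots> = (\<Sum>k<n. (\<Sum>l<n. L i l * V l k) * W k j)"
    by (rule sum_mat_mult_assoc)
  also have "\<dots> = W i j"
    using \<open>i < n\<close> by (simp add: inverts_mat_nD[OF L] if_distrib[of "\<lambda>x. x * _"] cong: if_cong)
  finally show ?thesis .
qed

lemma inverts_mat_n_symmetric:
  assumes V_sym: "\<And>i j. V i j = V j i" and W: "inverts_mat_n n V W" and "i < n" "j < n"
  shows "W i j = W j i"
proof -
  have "inverts_mat_n n (\<lambda>i j. W j i) V"
    unfolding inverts_mat_n_def
  proof (intro allI impI)
    fix i j assume "i < n" "j < n"
    then have "(\<Sum>k<n. W k i * V k j) = (if j = i then 1 else 0)"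
      using inverts_mat_nD[OF W, of j i] by (simp add: V_sym mult.commute)
    then show "(\<Sum>k<n. W k i * V k j) = (if i = j then 1 else 0)" by simp
  qed
  from inverts_mat_n_unique[OF this W] show ?thesis using assms by simp
qed

lemma strictly_pos_def_mat_invertible:
  assumes pd: "strictly_pos_def_mat n V"
  obtains W where "inverts_mat_n n V W" "inverts_mat_n n W V"
proof -
  define A where "A = mat n n (\<lambda>(i, j). V i j)"
  have A: "A \<in> carrier_mat n n" unfolding A_def by simp
  have "det A \<noteq> 0"
  proof
    assume "det A = 0"
    then obtain v where v: "v \<in> carrier_vec n" "v \<noteq> 0\<^sub>v n" "A *\<^sub>v v = 0\<^sub>v n"
      using det_0_iff_vec_prod_zero[OF A] by auto
    define x where "x = (\<lambda>i. if i < n then vec_index v i else 0)"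
    have "\<exists>i<n. x i \<noteq> 0"
      using v(1,2) unfolding x_def by (metis eq_vecI carrier_vecD index_zero_vec)
    with pd have "(\<Sum>i<n. \<Sum>j<n. x i * V i j * x j) > 0"
      unfolding strictly_pos_def_mat_def by auto
    moreover have "(\<Sum>j<n. V i j * x j) = 0" if "i < n" for i
    proof -
      have "(\<Sum>j<n. V i j * x j) = vec_index (A *\<^sub>v v) i"
        using that v(1) unfolding A_def x_def
        by (auto simp: mult_mat_vec_def scalar_prod_def row_def lessThan_atLeast0 intro!: sum.cong)
      then show ?thesis using v(3) that by simp
    qed
    then have "(\<Sum>i<n. \<Sum>j<n. x i * V i j * x j) = 0"
      by (simp add: sum_distrib_left[symmetric] mult.assoc)
    ultimately show False by simp
  qed
  then obtain B where B: "B \<in> carrier_mat n n" "A * B = 1\<^sub>m n" "B * A = 1\<^sub>m n"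
    using det_non_zero_imp_unit[OF A] unfolding Units_def ring_mat_def by auto
  have entry: "(\<Sum>k<n. C $$ (i, k) * D $$ (k, j)) = (C * D) $$ (i, j)"
    if "C \<in> carrier_mat n n" "D \<in> carrier_mat n n" "i < n" "j < n" for C D :: "real mat" and i j
    using that by (auto simp: index_mult_mat scalar_prod_def lessThan_atLeast0 intro!: sum.cong)
  have "inverts_mat_n n V (\<lambda>i j. B $$ (i, j))"
    using entry[OF A B(1)] B(2) unfolding inverts_mat_n_def by (simp add: A_def)
  moreover have "inverts_mat_n n (\<lambda>i j. B $$ (i, j)) V"
    using entry[OF B(1) A] B(3) unfolding inverts_mat_n_def by (simp add: A_def)
  ultimately show ?thesis by (rule that)
qed

lemma mat_inv_n_inverts:
  assumes "strictly_pos_def_mat n V"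
  shows "inverts_mat_n n V (mat_inv_n n V)" and "inverts_mat_n n (mat_inv_n n V) V"
proof -
  obtain W where VW: "inverts_mat_n n V W" and WV: "inverts_mat_n n W V"
    using strictly_pos_def_mat_invertible[OF assms] .
  define W' where "W' = (\<lambda>i j. if i < n \<and> j < n then W i j else 0)"
  have "(\<Sum>k<n. V i k * W' k j) = (\<Sum>k<n. V i k * W k j)"
    and "(\<Sum>k<n. W' j k * V k i) = (\<Sum>k<n. W j k * V k i)" if "j < n" for i j
    using that by (simp_all add: W'_def)
  then have block: "inverts_mat_n n V W' \<longleftrightarrow> inverts_mat_n n V W" "inverts_mat_n n W' V \<longleftrightarrow> inverts_mat_n n W V"
    unfolding inverts_mat_n_def by simp_all
  let ?inv = "\<lambda>U. inverts_mat_n n V U \<and> (\<forall>i j. n \<le> i \<or> n \<le> j \<longrightarrow> U i j = 0)"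
  have "mat_inv_n n V = W'"
    unfolding mat_inv_n_def inverts_mat_n_def[symmetric]
  proof (rule the_equality)
    show "?inv W'" using VW block W'_def by auto
    show "U = W'" if "?inv U" for U
    proof (intro ext)
      fix i j
      show "U i j = W' i j"
        using inverts_mat_n_unique[OF WV, of U i j] that unfolding W'_def by auto
    qed
  qed
  then show "inverts_mat_n n V (mat_inv_n n V)" and "inverts_mat_n n (mat_inv_n n V) V"
    using VW WV block by simp_all
qed

lemma bilin_n_inverse_pos:
  assumes pd: "strictly_pos_def_mat n V" and VW: "inverts_mat_n n V W" and t: "\<exists>i<n. t i \<noteq> 0"
  shows "bilin_n n W t t > 0"
proof -
  define y where "y = (\<lambda>k. \<Sum>j<n. W k j * t j)"
  have Vy: "(\<Sum>l<n. V k l * y l) = t k" if "k < n" for k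
  proof -
    have "(\<Sum>l<n. V k l * y l) = (\<Sum>j<n. (\<Sum>l<n. V k l * W l j) * t j)"
      unfolding y_def by (rule sum_mat_mult_assoc)
    also have "\<dots> = t k"
      using that by (simp add: inverts_mat_nD[OF VW] if_distrib[of "\<lambda>x. x * _"] cong: if_cong)
    finally show ?thesis .
  qed
  have "\<exists>i<n. y i \<noteq> 0"
  proof (rule ccontr)
    assume "\<not> (\<exists>i<n. y i \<noteq> 0)"
    then have "t k = 0" if "k < n" for k using Vy[OF that] by simp
    with t show False by blast
  qed
  then have "(\<Sum>i<n. \<Sum>j<n. y i * V i j * y j) > 0"
    using pd unfolding strictly_pos_def_mat_def by blast
  also have "(\<Sum>i<n. \<Sum>j<n. y i * V i j * y j) = (\<Sum>i<n. y i * t i)"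
    using Vy by (simp add: sum_distrib_left[symmetric] mult.assoc)
  also have "\<dots> = bilin_n n W t t"
    unfolding bilin_n_def y_def by (simp add: sum_distrib_left sum_distrib_right algebra_simps)
  finally show ?thesis .
qed

lemma bilin_n_lincomb_left:
  "bilin_n n W (\<lambda>i. a * x i + b * y i) v = a * bilin_n n W x v + b * bilin_n n W y v"
  unfolding bilin_n_def by (simp add: sum.distrib sum_distrib_left algebra_simps)

lemma bilin_n_lincomb_right:
  "bilin_n n W u (\<lambda>i. a * x i + b * y i) = a * bilin_n n W u x + b * bilin_n n W u y"
  unfolding bilin_n_def by (simp add: sum.distrib sum_distrib_left algebra_simps)

lemma bilin_n_commute:
  assumes "\<And>i j. i < n \<Longrightarrow> j < n \<Longrightarrow> W i j = W j i"
  shows "bilin_n n W x y = bilin_n n W y x"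
  unfolding bilin_n_def
  by (subst sum.swap) (use assms in \<open>auto simp: mult.commute mult.left_commute intro!: sum.cong\<close>)

lemma bilin_n_eq_sum_transpose: "bilin_n n W x y = (\<Sum>j<n. y j * (\<Sum>i<n. x i * W i j))"
  unfolding bilin_n_def by (subst sum.swap) (simp add: sum_distrib_left algebra_simps)

text \<open>\<open>min\<^sub>c (x - c t)' W (x - c t)\<close>, the residual of the generalised least-squares fit of \<open>x\<close> on \<open>t\<close>.\<close>
definition gls_residual :: "nat \<Rightarrow> (nat \<Rightarrow> nat \<Rightarrow> real) \<Rightarrow> (nat \<Rightarrow> real) \<Rightarrow> (nat \<Rightarrow> real) \<Rightarrow> real" where
  "gls_residual n W t x = bilin_n n W x x - (bilin_n n W t x)\<^sup>2 / bilin_n n W t t"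

lemma gls_residual_affine:
  assumes W_sym: "\<And>i j. i < n \<Longrightarrow> j < n \<Longrightarrow> W i j = W j i" and C: "bilin_n n W t t \<noteq> 0"
  shows "gls_residual n W t (\<lambda>i. \<mu> * t i + \<sigma> * x i) = \<sigma>\<^sup>2 * gls_residual n W t x"
proof -
  have "bilin_n n W x t = bilin_n n W t x" by (rule bilin_n_commute[OF W_sym])
  then show ?thesis
    using C unfolding gls_residual_def bilin_n_lincomb_left bilin_n_lincomb_right
    by (simp add: field_simps power2_eq_square)
qed

lemma sigma2_hat_eq_gls_residual:
  assumes "bilin_n n (mat_inv_n n (\<lambda>i j. R (t i) (t j))) t t \<noteq> 0"
  shows "sigma2_hat R t n X = gls_residual n (mat_inv_n n (\<lambda>i j. R (t i) (t j))) t X / real n"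
  using assms unfolding sigma2_hat_def gls_residual_def Let_def by (simp add: field_simps)

lemma sigma2_hat_affine:
  assumes pd: "strictly_pos_def_mat n (\<lambda>i j. R (t i) (t j))" and R_sym: "\<And>s u. R s u = R u s"
    and t: "\<exists>i<n. t i \<noteq> 0"
  shows "sigma2_hat R t n (\<lambda>i. \<mu> * t i + \<sigma> * x i)
    = \<sigma>\<^sup>2 / real n * gls_residual n (mat_inv_n n (\<lambda>i j. R (t i) (t j))) t x"
proof -
  let ?W = "mat_inv_n n (\<lambda>i j. R (t i) (t j))"
  have C: "bilin_n n ?W t t \<noteq> 0"
    using bilin_n_inverse_pos[OF pd mat_inv_n_inverts(1)[OF pd] t] by simp
  have W_sym: "?W i j = ?W j i" if "i < n" "j < n" for i j
    using inverts_mat_n_symmetric[OF _ mat_inv_n_inverts(1)[OF pd] that] R_sym by blast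
  show ?thesis
    using gls_residual_affine[OF W_sym C, of \<mu> \<sigma> x] by (simp add: sigma2_hat_eq_gls_residual[OF C])
qed

locale gaussian_sample = prob_space M for M :: "'a measure" +
  fixes n :: nat and g :: "nat \<Rightarrow> 'a \<Rightarrow> real" and W :: "nat \<Rightarrow> nat \<Rightarrow> real"
  assumes gaussian_lincomb: "\<And>c. centered_gaussian_rv M (\<lambda>\<omega>. \<Sum>i<n. c i * g i \<omega>)"
    and inverse_covariance: "inverts_mat_n n W (\<lambda>i j. expectation (\<lambda>\<omega>. g i \<omega> * g j \<omega>))"
begin

abbreviation lin_span :: "('a \<Rightarrow> real) set" where
  "lin_span \<equiv> range (\<lambda>c \<omega>. \<Sum>i<n. c i * g i \<omega>)"

sublocale centered_gaussian_space M lin_span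
proof
  show "centered_gaussian_rv M Y" if "Y \<in> lin_span" for Y
    using that gaussian_lincomb by blast
  show "(\<lambda>\<omega>. Y \<omega> + Z \<omega>) \<in> lin_span" if Y: "Y \<in> lin_span" and Z: "Z \<in> lin_span" for Y Z
  proof -
    obtain c d where "Y = (\<lambda>\<omega>. \<Sum>i<n. c i * g i \<omega>)" "Z = (\<lambda>\<omega>. \<Sum>i<n. d i * g i \<omega>)"
      using Y Z by blast
    then have "(\<lambda>\<omega>. Y \<omega> + Z \<omega>) = (\<lambda>\<omega>. \<Sum>i<n. (c i + d i) * g i \<omega>)"
      by (simp add: sum.distrib algebra_simps)
    then show ?thesis by (simp add: range_eqI)
  qed
  show "(\<lambda>\<omega>. a * Y \<omega>) \<in> lin_span" if Y: "Y \<in> lin_span" for a Y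
  proof -
    obtain c where "Y = (\<lambda>\<omega>. \<Sum>i<n. c i * g i \<omega>)" using Y by blast
    then have "(\<lambda>\<omega>. a * Y \<omega>) = (\<lambda>\<omega>. \<Sum>i<n. (a * c i) * g i \<omega>)"
      by (simp add: sum_distrib_left mult.assoc)
    then show ?thesis by (simp add: range_eqI)
  qed
qed

lemma sample_in_span: "i < n \<Longrightarrow> g i \<in> lin_span"
  by (rule range_eqI[of _ _ "\<lambda>j. if j = i then 1 else 0"]) (simp add: if_distrib[of "\<lambda>x. x * _"] cong: if_cong)

definition dual :: "nat \<Rightarrow> 'a \<Rightarrow> real" where
  "dual k \<omega> = (\<Sum>j<n. W k j * g j \<omega>)"

lemma dual_in_span: "dual k \<in> lin_span"
  unfolding dual_def by blast

lemma lincomb_dual_in_span: "(\<lambda>\<omega>. \<Sum>k<n. a k * dual k \<omega>) \<in> lin_span"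
proof -
  have "(\<lambda>\<omega>. \<Sum>k<n. a k * dual k \<omega>) = (\<lambda>\<omega>. \<Sum>j<n. (\<Sum>k<n. a k * W k j) * g j \<omega>)"
    unfolding dual_def sum_distrib_left sum_distrib_right mult.assoc by (subst sum.swap) simp
  then show ?thesis by (simp add: range_eqI)
qed

lemma cov_sample_dual:
  assumes "i < n" "k < n"
  shows "cov (g i) (dual k) = (if k = i then 1 else 0)"
proof -
  have "cov (g i) (dual k) = (\<Sum>j<n. W k j * cov (g i) (g j))"
    unfolding dual_def by (rule cov_sum_right) (use assms sample_in_span in auto)
  also have "\<dots> = (\<Sum>j<n. W k j * cov (g j) (g i))"
    by (simp only: cov_commute[of "g i"])
  also have "\<dots> = (if k = i then 1 else 0)"
    using inverts_mat_nD[OF inverse_covariance assms(2,1)] .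
  finally show ?thesis .
qed

lemma cov_dual_dual:
  assumes "i < n" "k < n"
  shows "cov (dual i) (dual k) = W k i"
proof -
  have "cov (dual i) (dual k) = (\<Sum>j<n. W k j * cov (dual i) (g j))"
    by (subst (2) dual_def, rule cov_sum_right) (use sample_in_span dual_in_span in auto)
  also have "\<dots> = (\<Sum>j<n. W k j * (if i = j then 1 else 0))"
    using assms by (simp add: cov_commute[of "dual i"] cov_sample_dual)
  also have "\<dots> = W k i"
    using assms by (simp add: if_distrib cong: if_cong)
  finally show ?thesis .
qed

lemma bilin_n_sample: "bilin_n n W (\<lambda>i. g i \<omega>) (\<lambda>i. g i \<omega>) = (\<Sum>i<n. g i \<omega> * dual i \<omega>)"
  unfolding bilin_n_def dual_def by (simp add: sum_distrib_left mult.assoc)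

lemma bilin_n_sample_right: "bilin_n n W t (\<lambda>i. g i \<omega>) = (\<Sum>i<n. t i * dual i \<omega>)"
  unfolding bilin_n_def dual_def by (simp add: sum_distrib_left mult.assoc)

lemma trace_covariance_inverse: "(\<Sum>i<n. \<Sum>k<n. cov (g i) (g k) * W k i) = real n"
proof -
  have "(\<Sum>i<n. \<Sum>k<n. cov (g i) (g k) * W k i) = (\<Sum>k<n. \<Sum>i<n. W k i * cov (g i) (g k))"
    by (subst sum.swap) (simp add: mult.commute)
  also have "\<dots> = (\<Sum>k<n. 1)"
    by (simp add: inverts_mat_nD[OF inverse_covariance])
  finally show ?thesis by simp
qed

definition quad_form :: "'a \<Rightarrow> real" where
  "quad_form \<omega> = (\<Sum>i<n. g i \<omega> * dual i \<omega>)"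

lemma integrable_quad_form: "integrable M quad_form"
  unfolding quad_form_def
  by (intro Bochner_Integration.integrable_sum) (simp add: integrable_mult sample_in_span dual_in_span)

lemma expectation_quad_form: "expectation quad_form = real n"
  unfolding quad_form_def using integrable_mult[OF sample_in_span dual_in_span]
  by (simp add: cov_sample_dual)

lemma expectation_quad_form_square:
  "integrable M (\<lambda>\<omega>. quad_form \<omega> * quad_form \<omega>)"
  "expectation (\<lambda>\<omega>. quad_form \<omega> * quad_form \<omega>) = (real n)\<^sup>2 + 2 * real n"
proof -
  let ?Q = "\<lambda>i k \<omega>. g i \<omega> * dual i \<omega> * g k \<omega> * dual k \<omega>"
  have QQ: "(\<lambda>\<omega>. quad_form \<omega> * quad_form \<omega>) = (\<lambda>\<omega>. \<Sum>i<n. \<Sum>k<n. ?Q i k \<omega>)"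
    unfolding quad_form_def by (simp add: sum_distrib_left sum_distrib_right algebra_simps)
  note Q = isserlis[OF sample_in_span dual_in_span sample_in_span dual_in_span]
  show "integrable M (\<lambda>\<omega>. quad_form \<omega> * quad_form \<omega>)"
    unfolding QQ by (intro Bochner_Integration.integrable_sum) (simp add: Q(1))
  have "expectation (\<lambda>\<omega>. quad_form \<omega> * quad_form \<omega>) = (\<Sum>i<n. expectation (\<lambda>\<omega>. \<Sum>k<n. ?Q i k \<omega>))"
    unfolding QQ by (intro Bochner_Integration.integral_sum Bochner_Integration.integrable_sum Q(1)) simp_all
  also have "\<dots> = (\<Sum>i<n. \<Sum>k<n. expectation (?Q i k))"
    by (intro sum.cong refl Bochner_Integration.integral_sum Q(1)) simp_all
  also have "\<dots> = (\<Sum>i<n. \<Sum>k<n. 1 + cov (g i) (g k) * W k i + (if i = k then 1 else 0))"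
    using Q(2) by (auto simp: cov_sample_dual cov_dual_dual cov_commute[of "dual _" "g _"] intro!: sum.cong)
  also have "\<dots> = (real n)\<^sup>2 + 2 * real n"
    by (simp add: sum.distrib trace_covariance_inverse power2_eq_square)
  finally show "expectation (\<lambda>\<omega>. quad_form \<omega> * quad_form \<omega>) = (real n)\<^sup>2 + 2 * real n" .
qed

definition cross_form :: "(nat \<Rightarrow> real) \<Rightarrow> 'a \<Rightarrow> real" where
  "cross_form t \<omega> = (\<Sum>i<n. t i * dual i \<omega>)"

lemma cross_form_in_span: "cross_form t \<in> lin_span"
  unfolding cross_form_def by (rule lincomb_dual_in_span)

lemma cov_sample_cross: "i < n \<Longrightarrow> cov (g i) (cross_form t) = t i"
  unfolding cross_form_def
  by (simp add: cov_sum_right sample_in_span dual_in_span cov_sample_dual if_distrib cong: if_cong)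

lemma cov_dual_cross: "i < n \<Longrightarrow> cov (dual i) (cross_form t) = (\<Sum>k<n. t k * W k i)"
  unfolding cross_form_def
  by (simp add: cov_sum_right dual_in_span cov_dual_dual)

lemma cov_cross_cross: "cov (cross_form t) (cross_form t) = bilin_n n W t t"
proof -
  have "cov (cross_form t) (cross_form t) = (\<Sum>i<n. t i * cov (cross_form t) (dual i))"
    by (subst (2) cross_form_def, rule cov_sum_right) (use cross_form_in_span dual_in_span in auto)
  also have "\<dots> = bilin_n n W t t"
    by (simp add: cov_commute[of "cross_form t"] cov_dual_cross bilin_n_eq_sum_transpose)
  finally show ?thesis .
qed

lemma gls_residual_sample:
  "gls_residual n W t (\<lambda>i. g i \<omega>) = quad_form \<omega> - (cross_form t \<omega>)\<^sup>2 / bilin_n n W t t"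
  unfolding gls_residual_def bilin_n_sample bilin_n_sample_right quad_form_def cross_form_def ..

lemma expectation_quad_form_cross_square:
  "integrable M (\<lambda>\<omega>. quad_form \<omega> * (cross_form t \<omega>)\<^sup>2)"
  "expectation (\<lambda>\<omega>. quad_form \<omega> * (cross_form t \<omega>)\<^sup>2) = (real n + 2) * bilin_n n W t t"
proof -
  let ?R = "\<lambda>i \<omega>. g i \<omega> * dual i \<omega> * cross_form t \<omega> * cross_form t \<omega>"
  have QB: "(\<lambda>\<omega>. quad_form \<omega> * (cross_form t \<omega>)\<^sup>2) = (\<lambda>\<omega>. \<Sum>i<n. ?R i \<omega>)"
    unfolding quad_form_def by (simp add: sum_distrib_right power2_eq_square mult.assoc)
  note R = isserlis[OF sample_in_span dual_in_span cross_form_in_span cross_form_in_span]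
  show "integrable M (\<lambda>\<omega>. quad_form \<omega> * (cross_form t \<omega>)\<^sup>2)"
    unfolding QB by (intro Bochner_Integration.integrable_sum R(1)) simp
  have "expectation (\<lambda>\<omega>. quad_form \<omega> * (cross_form t \<omega>)\<^sup>2) = (\<Sum>i<n. expectation (?R i))"
    unfolding QB by (intro Bochner_Integration.integral_sum R(1)) simp
  also have "\<dots> = (\<Sum>i<n. 2 * (t i * (\<Sum>k<n. t k * W k i)) + bilin_n n W t t)"
    using R(2) by (simp add: cov_sample_dual cov_sample_cross cov_dual_cross cov_cross_cross)
  also have "\<dots> = 2 * (\<Sum>i<n. t i * (\<Sum>k<n. t k * W k i)) + real n * bilin_n n W t t"
    by (simp add: sum.distrib sum_distrib_left)
  also have "\<dots> = (real n + 2) * bilin_n n W t t"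
    by (simp add: bilin_n_eq_sum_transpose algebra_simps)
  finally show "expectation (\<lambda>\<omega>. quad_form \<omega> * (cross_form t \<omega>)\<^sup>2) = (real n + 2) * bilin_n n W t t" .
qed

lemma gls_residual_moments:
  assumes C: "bilin_n n W t t \<noteq> 0"
  defines "T \<equiv> \<lambda>\<omega>. gls_residual n W t (\<lambda>i. g i \<omega>)"
  shows "integrable M T" and "expectation T = real n - 1"
    and "integrable M (\<lambda>\<omega>. (T \<omega>)\<^sup>2)" and "expectation (\<lambda>\<omega>. (T \<omega>)\<^sup>2) = (real n)\<^sup>2 - 1"
proof -
  let ?C = "bilin_n n W t t" and ?B = "cross_form t"
  have T: "T = (\<lambda>\<omega>. quad_form \<omega> - (1 / ?C) * (?B \<omega> * ?B \<omega>))"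
    unfolding T_def gls_residual_sample by (simp add: power2_eq_square)
  have B2: "integrable M (\<lambda>\<omega>. ?B \<omega> * ?B \<omega>)"
    using integrable_mult cross_form_in_span by blast
  show "integrable M T"
    unfolding T using integrable_quad_form B2 by simp
  show "expectation T = real n - 1"
    unfolding T using integrable_quad_form B2 expectation_quad_form cov_cross_cross C by simp
  have T2: "(\<lambda>\<omega>. (T \<omega>)\<^sup>2) = (\<lambda>\<omega>. quad_form \<omega> * quad_form \<omega> - (2 / ?C) * (quad_form \<omega> * (?B \<omega>)\<^sup>2)
      + (1 / ?C\<^sup>2) * (?B \<omega> * ?B \<omega> * ?B \<omega> * ?B \<omega>))"
    unfolding T using C by (simp add: fun_eq_iff field_simps power2_eq_square)
  note Q2 = expectation_quad_form_square and QB2 = expectation_quad_form_cross_square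
  note B4 = isserlis[OF cross_form_in_span cross_form_in_span cross_form_in_span cross_form_in_span]
  show "integrable M (\<lambda>\<omega>. (T \<omega>)\<^sup>2)"
    unfolding T2 using Q2(1) QB2(1) B4(1) by simp
  have "expectation (\<lambda>\<omega>. (T \<omega>)\<^sup>2)
      = ((real n)\<^sup>2 + 2 * real n) - (2 / ?C) * ((real n + 2) * ?C) + (1 / ?C\<^sup>2) * (3 * ?C\<^sup>2)"
    unfolding T2 using Q2 QB2 B4 by (simp add: cov_cross_cross power2_eq_square)
  also have "\<dots> = (real n)\<^sup>2 - 1"
    using C by (simp add: field_simps power2_eq_square)
  finally show "expectation (\<lambda>\<omega>. (T \<omega>)\<^sup>2) = (real n)\<^sup>2 - 1" .
qed

lemma scaled_gls_residual_moments:
  fixes \<sigma> :: real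
  assumes C: "bilin_n n W t t \<noteq> 0" and "n > 0"
  defines "S \<equiv> \<lambda>\<omega>. \<sigma>\<^sup>2 / real n * gls_residual n W t (\<lambda>i. g i \<omega>)"
  shows "expectation S = \<sigma>\<^sup>2 * (real n - 1) / real n"
    and "expectation (\<lambda>\<omega>. \<bar>S \<omega> - \<sigma>\<^sup>2\<bar>\<^sup>2) = \<sigma> ^ 4 * (2 * real n - 1) / (real n)\<^sup>2"
proof -
  let ?T = "\<lambda>\<omega>. gls_residual n W t (\<lambda>i. g i \<omega>)"
  note T = gls_residual_moments[OF C]
  show "expectation S = \<sigma>\<^sup>2 * (real n - 1) / real n"
    unfolding S_def using T by simp
  have "(\<lambda>\<omega>. \<bar>S \<omega> - \<sigma>\<^sup>2\<bar>\<^sup>2)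
      = (\<lambda>\<omega>. (\<sigma> ^ 4 / (real n)\<^sup>2) * (?T \<omega>)\<^sup>2 - (2 * \<sigma> ^ 4 / real n) * ?T \<omega> + \<sigma> ^ 4)"
    unfolding S_def using \<open>n > 0\<close> by (simp add: fun_eq_iff power2_eq_square power4_eq_xxxx field_simps)
  then have "expectation (\<lambda>\<omega>. \<bar>S \<omega> - \<sigma>\<^sup>2\<bar>\<^sup>2)
      = (\<sigma> ^ 4 / (real n)\<^sup>2) * ((real n)\<^sup>2 - 1) - (2 * \<sigma> ^ 4 / real n) * (real n - 1) + \<sigma> ^ 4"
    using T by (simp add: prob_space)
  also have "\<dots> = \<sigma> ^ 4 * (2 * real n - 1) / (real n)\<^sup>2"
    using \<open>n > 0\<close> by (simp add: field_simps power2_eq_square)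
  finally show "expectation (\<lambda>\<omega>. \<bar>S \<omega> - \<sigma>\<^sup>2\<bar>\<^sup>2) = \<sigma> ^ 4 * (2 * real n - 1) / (real n)\<^sup>2" .
qed

end

lemma (in prob_space) gaussian_sample_of_process:
  assumes "centered_gaussian_process M G" and "\<And>i. t i \<ge> 0"
    and pd: "strictly_pos_def_mat n (\<lambda>i j. expectation (\<lambda>\<omega>. G (t i) \<omega> * G (t j) \<omega>))"
  shows "gaussian_sample M n (\<lambda>i. G (t i)) (mat_inv_n n (\<lambda>i j. expectation (\<lambda>\<omega>. G (t i) \<omega> * G (t j) \<omega>)))"
proof
  show "centered_gaussian_rv M (\<lambda>\<omega>. \<Sum>i<n. c i * G (t i) \<omega>)" for c
    using assms(1,2) unfolding centered_gaussian_process_def by blast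
  show "inverts_mat_n n (mat_inv_n n (\<lambda>i j. expectation (\<lambda>\<omega>. G (t i) \<omega> * G (t j) \<omega>)))
      (\<lambda>i j. expectation (\<lambda>\<omega>. G (t i) \<omega> * G (t j) \<omega>))"
    by (rule mat_inv_n_inverts(2)[OF pd])
qed

lemma (in prob_space) sigma2_hat_moments:
  fixes \<mu> \<sigma> :: real
  assumes "centered_gaussian_process M G" and t_pos: "\<And>i. t i > 0" and "n > 0"
    and pd: "strictly_pos_def_mat n (\<lambda>i j. R (t i) (t j))"
    and R: "R = (\<lambda>s u. expectation (\<lambda>\<omega>. G s \<omega> * G u \<omega>))"
  defines "S \<equiv> \<lambda>\<omega>. sigma2_hat R t n (\<lambda>i. \<mu> * t i + \<sigma> * G (t i) \<omega>)"
  shows "expectation S = \<sigma>\<^sup>2 * (real n - 1) / real n"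
    and "expectation (\<lambda>\<omega>. \<bar>S \<omega> - \<sigma>\<^sup>2\<bar>\<^sup>2) = \<sigma> ^ 4 * (2 * real n - 1) / (real n)\<^sup>2"
proof -
  let ?W = "mat_inv_n n (\<lambda>i j. R (t i) (t j))"
  interpret gaussian_sample M n "\<lambda>i. G (t i)" ?W
    using gaussian_sample_of_process[OF assms(1) less_imp_le[OF t_pos]] pd unfolding R .
  have R_sym: "R s u = R u s" for s u
    unfolding R by (simp add: mult.commute)
  have t_nonzero: "\<exists>i<n. t i \<noteq> 0"
    using \<open>n > 0\<close> t_pos[of 0] by (intro exI[of _ 0]) simp
  have S: "S = (\<lambda>\<omega>. \<sigma>\<^sup>2 / real n * gls_residual n ?W t (\<lambda>i. G (t i) \<omega>))"
    unfolding S_def by (rule ext, rule sigma2_hat_affine[OF pd R_sym t_nonzero])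
  have C: "bilin_n n ?W t t \<noteq> 0"
    using bilin_n_inverse_pos[OF pd mat_inv_n_inverts(1)[OF pd] t_nonzero] by simp
  show "expectation S = \<sigma>\<^sup>2 * (real n - 1) / real n"
    and "expectation (\<lambda>\<omega>. \<bar>S \<omega> - \<sigma>\<^sup>2\<bar>\<^sup>2) = \<sigma> ^ 4 * (2 * real n - 1) / (real n)\<^sup>2"
    unfolding S using scaled_gls_residual_moments[OF C \<open>n > 0\<close>] by blast+
qed

theorem lemma4p3:
  fixes M :: "'a measure" and G :: "real \<Rightarrow> 'a \<Rightarrow> real"
    and \<mu> \<sigma> :: real and t :: "nat \<Rightarrow> real"
  assumes "prob_space M"
    and "centered_gaussian_process M G"
    and "R = (\<lambda>s u. prob_space.expectation M (\<lambda>\<omega>. G s \<omega> * G u \<omega>))"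
    and "\<sigma> > 0"
    and "X = (\<lambda>s \<omega>. \<mu> * s + \<sigma> * G s \<omega>)"
    and "t 0 > 0" and "strict_mono t"
    and "\<And>n. strictly_pos_def_mat n (\<lambda>i j. R (t i) (t j))"
    and "S = (\<lambda>n \<omega>. sigma2_hat R t n (\<lambda>i. X (t i) \<omega>))"
  shows "((\<lambda>n. prob_space.expectation M (S n)) \<longlonglongrightarrow> \<sigma>\<^sup>2) \<and>
    ((\<lambda>n. prob_space.expectation M (\<lambda>\<omega>. \<bar>S n \<omega> - \<sigma>\<^sup>2\<bar>\<^sup>2)) \<longlonglongrightarrow> 0)"
proof -
  interpret prob_space M by fact
  have t_pos: "t i > 0" for i
    using assms(6) strict_mono_less_eq[OF assms(7), of 0 i] by simp
  have moments: "expectation (S n) = \<sigma>\<^sup>2 * (real n - 1) / real n"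
    "expectation (\<lambda>\<omega>. \<bar>S n \<omega> - \<sigma>\<^sup>2\<bar>\<^sup>2) = \<sigma> ^ 4 * (2 * real n - 1) / (real n)\<^sup>2" if "n > 0" for n
    unfolding assms(9,5) using sigma2_hat_moments[OF assms(2) t_pos that assms(8) assms(3)] by blast+
  have ev: "\<forall>\<^sub>F n in sequentially. expectation (S n) = \<sigma>\<^sup>2 * (real n - 1) / real n"
    "\<forall>\<^sub>F n in sequentially. expectation (\<lambda>\<omega>. \<bar>S n \<omega> - \<sigma>\<^sup>2\<bar>\<^sup>2) = \<sigma> ^ 4 * (2 * real n - 1) / (real n)\<^sup>2"
    by (rule eventually_mono[OF eventually_gt_at_top[of 0]], erule moments)+
  have "(\<lambda>n. \<sigma>\<^sup>2 * (real n - 1) / real n) \<longlonglongrightarrow> \<sigma>\<^sup>2"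
    and "(\<lambda>n. \<sigma> ^ 4 * (2 * real n - 1) / (real n)\<^sup>2) \<longlonglongrightarrow> 0"
    by real_asymp+
  then show ?thesis
    unfolding tendsto_cong[OF ev(1)] tendsto_cong[OF ev(2)] by blast
qed

end
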